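(* Let $(E,\mu)$ and $(F,\nu)$ be fuzzy Riesz spaces and $T:E\rightarrow F$ a fuzzy Riesz homomorphism. If $I_z$ is the fuzzy principal ideal in $E$ generated by an element $z\in E^+$, then $T(I_z)$ is the fuzzy principal ideal in $T(E)$ generated by $Tz$.
   Context: A fuzzy order on a real vector space $E$ is a map $\mu:E\times E\to[0,1]$ with $\mu(x,x)=1$; $\mu(x,y)+\mu(y,x)>1$ implies $x=y$; and $\mu(x,z)\ge\sup_{y}\min(\mu(x,y),\mu(y,z))$. Write $x\le y$ for $\mu(x,y)>\frac12$; suprema/infima are taken with respect to this relation. $(E,\mu)$ is a fuzzy ordered linear space if $\mu(x_1,x_2)>\frac12$ implies $\mu(x_1,x_2)\le\mu(x_1+x,x_2+x)$ for all $x$ and $\mu(x_1,x_2)\le\mu(\alpha x_1,\alpha x_2)$ for all $\alpha>0$; it is a fuzzy Riesz space if $x\vee y=\sup\{x,y\}$ and $x\wedge y=\inf\{x,y\}$ exist for all $x,y$. $E^+=\{x: \mu(0,x)>\frac12\}$, $|x|=x\vee(-x)$. A fuzzy Riesz homomorphism is a linear map with $T(x\vee y)=Tx\vee Ty$; $T(E)$ is a fuzzy Riesz subspace of $F$ regarded as a fuzzy Riesz space with the restricted order. A fuzzy ideal is a vector subspace $A$ such that $\mu(|x|,|y|)>\frac12$ and $y\in A$ imply $x\in A$. The fuzzy principal ideal generated by $x$ is the smallest fuzzy ideal containing $x$. *)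

theory Defs
  imports Complex_Main
begin

text \<open>Fuzzy orders on a carrier V (a vector subspace of a real vector space).
  For the whole space E one takes V = UNIV; for T(E) one takes V = range T with
  the restricted fuzzy order.\<close>

definition fuzzy_order_on :: "'a set \<Rightarrow> ('a \<Rightarrow> 'a \<Rightarrow> real) \<Rightarrow> bool" where
  "fuzzy_order_on V \<mu> \<longleftrightarrow>
     (\<forall>x\<in>V. \<forall>y\<in>V. 0 \<le> \<mu> x y \<and> \<mu> x y \<le> 1) \<and>
     (\<forall>x\<in>V. \<mu> x x = 1) \<and>
     (\<forall>x\<in>V. \<forall>y\<in>V. \<mu> x y + \<mu> y x > 1 \<longrightarrow> x = y) \<and>
     (\<forall>x\<in>V. \<forall>z\<in>V. (SUP y\<in>V. min (\<mu> x y) (\<mu> y z)) \<le> \<mu> x z)"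

definition fle :: "('a \<Rightarrow> 'a \<Rightarrow> real) \<Rightarrow> 'a \<Rightarrow> 'a \<Rightarrow> bool" where
  "fle \<mu> x y \<longleftrightarrow> \<mu> x y > 1/2"

definition is_fsup_on :: "'a set \<Rightarrow> ('a \<Rightarrow> 'a \<Rightarrow> real) \<Rightarrow> 'a set \<Rightarrow> 'a \<Rightarrow> bool" where
  "is_fsup_on V \<mu> S s \<longleftrightarrow> s \<in> V \<and> (\<forall>x\<in>S. fle \<mu> x s) \<and>
     (\<forall>u\<in>V. (\<forall>x\<in>S. fle \<mu> x u) \<longrightarrow> fle \<mu> s u)"

definition is_finf_on :: "'a set \<Rightarrow> ('a \<Rightarrow> 'a \<Rightarrow> real) \<Rightarrow> 'a set \<Rightarrow> 'a \<Rightarrow> bool" where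
  "is_finf_on V \<mu> S s \<longleftrightarrow> s \<in> V \<and> (\<forall>x\<in>S. fle \<mu> s x) \<and>
     (\<forall>u\<in>V. (\<forall>x\<in>S. fle \<mu> u x) \<longrightarrow> fle \<mu> u s)"

definition fsup :: "'a set \<Rightarrow> ('a \<Rightarrow> 'a \<Rightarrow> real) \<Rightarrow> 'a \<Rightarrow> 'a \<Rightarrow> 'a" where
  "fsup V \<mu> x y = (THE s. is_fsup_on V \<mu> {x, y} s)"

definition fabs :: "'a set \<Rightarrow> ('a \<Rightarrow> 'a \<Rightarrow> real) \<Rightarrow> 'a::real_vector \<Rightarrow> 'a" where
  "fabs V \<mu> x = fsup V \<mu> x (- x)"

definition fuzzy_ordered_linear_space_on ::
    "'a::real_vector set \<Rightarrow> ('a \<Rightarrow> 'a \<Rightarrow> real) \<Rightarrow> bool" where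
  "fuzzy_ordered_linear_space_on V \<mu> \<longleftrightarrow> subspace V \<and> fuzzy_order_on V \<mu> \<and>
     (\<forall>x1\<in>V. \<forall>x2\<in>V. \<mu> x1 x2 > 1/2 \<longrightarrow>
        (\<forall>x\<in>V. \<mu> x1 x2 \<le> \<mu> (x1 + x) (x2 + x)) \<and>
        (\<forall>\<alpha>::real. \<alpha> > 0 \<longrightarrow> \<mu> x1 x2 \<le> \<mu> (\<alpha> *\<^sub>R x1) (\<alpha> *\<^sub>R x2)))"

definition fuzzy_riesz_space_on :: "'a::real_vector set \<Rightarrow> ('a \<Rightarrow> 'a \<Rightarrow> real) \<Rightarrow> bool" where
  "fuzzy_riesz_space_on V \<mu> \<longleftrightarrow> fuzzy_ordered_linear_space_on V \<mu> \<and>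
     (\<forall>x\<in>V. \<forall>y\<in>V. (\<exists>s. is_fsup_on V \<mu> {x, y} s) \<and> (\<exists>i. is_finf_on V \<mu> {x, y} i))"

abbreviation fuzzy_riesz_space :: "('a::real_vector \<Rightarrow> 'a \<Rightarrow> real) \<Rightarrow> bool" where
  "fuzzy_riesz_space \<mu> \<equiv> fuzzy_riesz_space_on UNIV \<mu>"

definition fuzzy_riesz_hom ::
    "('a::real_vector \<Rightarrow> 'a \<Rightarrow> real) \<Rightarrow> ('b::real_vector \<Rightarrow> 'b \<Rightarrow> real) \<Rightarrow> ('a \<Rightarrow> 'b) \<Rightarrow> bool" where
  "fuzzy_riesz_hom \<mu> \<nu> T \<longleftrightarrow> linear T \<and>
     (\<forall>x y. T (fsup UNIV \<mu> x y) = fsup UNIV \<nu> (T x) (T y))"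

definition fuzzy_ideal_on :: "'a::real_vector set \<Rightarrow> ('a \<Rightarrow> 'a \<Rightarrow> real) \<Rightarrow> 'a set \<Rightarrow> bool" where
  "fuzzy_ideal_on V \<mu> A \<longleftrightarrow> subspace A \<and> A \<subseteq> V \<and>
     (\<forall>x\<in>V. \<forall>y\<in>A. fle \<mu> (fabs V \<mu> x) (fabs V \<mu> y) \<longrightarrow> x \<in> A)"

definition fuzzy_principal_ideal_on ::
    "'a::real_vector set \<Rightarrow> ('a \<Rightarrow> 'a \<Rightarrow> real) \<Rightarrow> 'a \<Rightarrow> 'a set" where
  "fuzzy_principal_ideal_on V \<mu> x = \<Inter> {A. fuzzy_ideal_on V \<mu> A \<and> x \<in> A}"

definition fpos :: "('a::real_vector \<Rightarrow> 'a \<Rightarrow> real) \<Rightarrow> 'a set" where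
  "fpos \<mu> = {x. \<mu> 0 x > 1/2}"

end

theory Submission
  imports Defs
begin

text \<open>A fuzzy Riesz homomorphism maps fuzzy ideals of \<open>E\<close> to fuzzy ideals of \<open>T(E)\<close>, and pulls
  fuzzy ideals of \<open>T(E)\<close> back to fuzzy ideals of \<open>E\<close>; hence it maps the smallest ideal containing
  \<open>z\<close> onto the smallest one containing \<open>T z\<close>. The only nontrivial step is solidity of the
  image of an ideal: if \<open>|T x| \<le> T w\<close> with \<open>w \<ge> 0\<close>, then \<open>x' = (x\<^sup>+ \<and> w) - (x\<^sup>- \<and> w)\<close> satisfies
  \<open>T x' = T x\<close> and \<open>|x'| \<le> w\<close>.\<close>

text \<open>Riesz homomorphisms preserve infima because of the Riesz space identity
  \<open>x \<and> y = x + y - x \<or> y\<close>, which we take as the definition.\<close>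

definition finf :: "('a::real_vector \<Rightarrow> 'a \<Rightarrow> real) \<Rightarrow> 'a \<Rightarrow> 'a \<Rightarrow> 'a" where
  "finf m x y = x + y - fsup UNIV m x y"

locale fuzzy_riesz =
  fixes m :: "'a::real_vector \<Rightarrow> 'a \<Rightarrow> real"
  assumes riesz: "fuzzy_riesz_space m"
begin

lemma ordered_linear_space: "fuzzy_ordered_linear_space_on UNIV m"
  using riesz by (simp add: fuzzy_riesz_space_on_def)

lemma fuzzy_order: "fuzzy_order_on UNIV m"
  using ordered_linear_space by (simp add: fuzzy_ordered_linear_space_on_def)

lemma fle_refl: "fle m x x"
  using fuzzy_order by (simp add: fuzzy_order_on_def fle_def)

lemma fle_antisym: "fle m x y \<Longrightarrow> fle m y x \<Longrightarrow> x = y"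
  using fuzzy_order unfolding fuzzy_order_on_def fle_def by auto

lemma fle_trans:
  assumes "fle m x y" "fle m y z"
  shows "fle m x z"
proof -
  have bounded: "min (m x w) (m w z) \<le> 1" for w
    using fuzzy_order unfolding fuzzy_order_on_def by (metis UNIV_I min.coboundedI1)
  have "min (m x y) (m y z) \<le> (SUP w. min (m x w) (m w z))"
    by (rule cSUP_upper) (use bounded in \<open>auto simp: bdd_above_def\<close>)
  also have "\<dots> \<le> m x z"
    using fuzzy_order unfolding fuzzy_order_on_def by auto
  finally show ?thesis
    using assms by (simp add: fle_def)
qed

lemma fle_add_right: "fle m x y \<Longrightarrow> fle m (x + a) (y + a)"
  using ordered_linear_space unfolding fuzzy_ordered_linear_space_on_def fle_def
  by (meson UNIV_I order_less_le_trans)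

lemma fle_translate: "fle m x y \<Longrightarrow> x' = x + a \<Longrightarrow> y' = y + a \<Longrightarrow> fle m x' y'"
  using fle_add_right by simp

lemma fle_scaleR: "fle m x y \<Longrightarrow> (c::real) > 0 \<Longrightarrow> fle m (c *\<^sub>R x) (c *\<^sub>R y)"
  using ordered_linear_space unfolding fuzzy_ordered_linear_space_on_def fle_def
  by (meson UNIV_I order_less_le_trans)

lemma fle_add_mono: "fle m x y \<Longrightarrow> fle m u v \<Longrightarrow> fle m (x + u) (y + v)"
  by (metis fle_add_right add.commute fle_trans)

lemma fle_neg: "fle m x y \<Longrightarrow> fle m (- y) (- x)"
  by (erule fle_translate[where a = "- x - y"]) auto

lemma fle_diff_mono: "fle m x y \<Longrightarrow> fle m u v \<Longrightarrow> fle m (x - v) (y - u)"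
  using fle_add_mono[of x y "- v" "- u"] fle_neg by simp

lemma is_fsup_on_unique: "is_fsup_on V m S s \<Longrightarrow> is_fsup_on V m S s' \<Longrightarrow> s = s'"
  unfolding is_fsup_on_def using fle_antisym by blast

lemma fsup_on_eqI: "is_fsup_on V m {x, y} s \<Longrightarrow> fsup V m x y = s"
  unfolding fsup_def using is_fsup_on_unique by blast

lemma is_fsup_fsup: "is_fsup_on UNIV m {x, y} (fsup UNIV m x y)"
proof -
  obtain s where "is_fsup_on UNIV m {x, y} s"
    using riesz by (auto simp: fuzzy_riesz_space_on_def)
  then show ?thesis
    by (simp add: fsup_on_eqI)
qed

lemma fsup_upper1: "fle m x (fsup UNIV m x y)"
  using is_fsup_fsup unfolding is_fsup_on_def by blast

lemma fsup_upper2: "fle m y (fsup UNIV m x y)"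
  using is_fsup_fsup unfolding is_fsup_on_def by blast

lemma fsup_least: "fle m x u \<Longrightarrow> fle m y u \<Longrightarrow> fle m (fsup UNIV m x y) u"
  using is_fsup_fsup unfolding is_fsup_on_def by blast

lemma fsup_commute: "fsup V m x y = fsup V m y x"
  by (simp add: fsup_def insert_commute)

lemma fsup_absorb2: "fle m x y \<Longrightarrow> fsup UNIV m x y = y"
  by (rule fsup_on_eqI) (auto simp: is_fsup_on_def fle_refl)

lemma fsup_on_subset:
  assumes "fsup UNIV m x y \<in> V"
  shows "fsup V m x y = fsup UNIV m x y"
  using assms is_fsup_fsup by (intro fsup_on_eqI) (auto simp: is_fsup_on_def)

lemma fsup_add_distrib: "fsup UNIV m (x + a) (y + a) = fsup UNIV m x y + a"
proof (rule fsup_on_eqI, unfold is_fsup_on_def, intro conjI ballI impI)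
  fix u assume "\<forall>v\<in>{x + a, y + a}. fle m v u"
  then have "fle m x (u - a)" "fle m y (u - a)"
    by (auto elim: fle_translate[where a = "- a"])
  then have "fle m (fsup UNIV m x y) (u - a)"
    by (rule fsup_least)
  then show "fle m (fsup UNIV m x y + a) u"
    by (rule fle_translate[where a = a]) auto
qed (auto intro: fle_add_right fsup_upper1 fsup_upper2)

lemma fsup_pos_minus_neg: "fsup UNIV m x 0 - fsup UNIV m (- x) 0 = x"
proof -
  have "fsup UNIV m x 0 + (- x) = fsup UNIV m (x + - x) (0 + - x)"
    by (rule fsup_add_distrib[symmetric])
  also have "\<dots> = fsup UNIV m (- x) 0"
    by (simp add: fsup_commute)
  finally show ?thesis
    by (simp add: algebra_simps)
qed

lemma finf_lower2: "fle m (finf m x y) y"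
  unfolding finf_def by (rule fle_translate[OF fsup_upper1, where a = "y - fsup UNIV m x y"]) auto

lemma finf_greatest:
  assumes "fle m u x" "fle m u y"
  shows "fle m u (finf m x y)"
proof -
  have "fle m x (x + y - u)"
    using assms(2) by (rule fle_translate[where a = "x - u"]) auto
  moreover have "fle m y (x + y - u)"
    using assms(1) by (rule fle_translate[where a = "y - u"]) auto
  ultimately have "fle m (fsup UNIV m x y) (x + y - u)"
    by (rule fsup_least)
  then show ?thesis
    unfolding finf_def by (rule fle_translate[where a = "u - fsup UNIV m x y"]) auto
qed

lemma finf_absorb1: "fle m x y \<Longrightarrow> finf m x y = x"
  unfolding finf_def by (simp add: fsup_absorb2)

lemma fabs_le_iff: "fle m (fabs UNIV m x) w \<longleftrightarrow> fle m x w \<and> fle m (- x) w"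
  unfolding fabs_def by (meson fsup_upper1 fsup_upper2 fsup_least fle_trans)

lemma fabs_nonneg: "fle m 0 (fabs UNIV m x)"
proof -
  have "fle m (x + - x) (fabs UNIV m x + fabs UNIV m x)"
    using fabs_le_iff fle_refl fle_add_mono by metis
  then have "fle m ((1/2) *\<^sub>R 0) ((1/2) *\<^sub>R (fabs UNIV m x + fabs UNIV m x))"
    by (intro fle_scaleR) simp_all
  then show ?thesis
    by (simp add: scaleR_2[symmetric] del: scaleR_2)
qed

end

locale riesz_homomorphism =
  E: fuzzy_riesz \<mu> + F: fuzzy_riesz \<nu>
  for \<mu> :: "'a::real_vector \<Rightarrow> 'a \<Rightarrow> real" and \<nu> :: "'b::real_vector \<Rightarrow> 'b \<Rightarrow> real" +
  fixes T :: "'a \<Rightarrow> 'b"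
  assumes hom: "fuzzy_riesz_hom \<mu> \<nu> T"
begin

lemma linear: "linear T"
  using hom by (simp add: fuzzy_riesz_hom_def)

lemma fsup_hom: "T (fsup UNIV \<mu> x y) = fsup UNIV \<nu> (T x) (T y)"
  using hom by (simp add: fuzzy_riesz_hom_def)

lemma finf_hom: "T (finf \<mu> x y) = finf \<nu> (T x) (T y)"
  by (simp add: finf_def fsup_hom linear_add[OF linear] linear_diff[OF linear])

lemma fabs_hom: "T (fabs UNIV \<mu> x) = fabs UNIV \<nu> (T x)"
  by (simp add: fabs_def fsup_hom linear_neg[OF linear])

lemma fabs_range_hom: "fabs (range T) \<nu> (T x) = T (fabs UNIV \<mu> x)"
  unfolding fabs_hom unfolding fabs_def
  by (rule F.fsup_on_subset) (metis fabs_def fabs_hom rangeI)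

lemma fle_hom: "fle \<mu> x y \<Longrightarrow> fle \<nu> (T x) (T y)"
  using F.fsup_upper1[of "T x" "T y"] by (simp flip: fsup_hom add: E.fsup_absorb2)

lemma lift_fabs_le:
  assumes w: "fle \<mu> 0 w" and Tx: "fle \<nu> (fabs UNIV \<nu> (T x)) (T w)"
  obtains x' where "T x' = T x" and "fle \<mu> (fabs UNIV \<mu> x') w"
proof
  define a where "a = finf \<mu> (fsup UNIV \<mu> x 0) w"
  define b where "b = finf \<mu> (fsup UNIV \<mu> (- x) 0) w"
  have Tw: "fle \<nu> 0 (T w)"
    using fle_hom[OF w] by (simp add: linear_0[OF linear])
  have "T a = fsup UNIV \<nu> (T x) 0"
    using Tx Tw unfolding a_def finf_hom fsup_hom F.fabs_le_iff
    by (simp add: linear_0[OF linear] F.finf_absorb1 F.fsup_least)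
  moreover have "T b = fsup UNIV \<nu> (- T x) 0"
    using Tx Tw unfolding b_def finf_hom fsup_hom F.fabs_le_iff
    by (simp add: linear_0[OF linear] linear_neg[OF linear] F.finf_absorb1 F.fsup_least)
  ultimately show "T (a - b) = T x"
    by (simp add: linear_diff[OF linear] F.fsup_pos_minus_neg)
  have a: "fle \<mu> 0 a" "fle \<mu> a w" and b: "fle \<mu> 0 b" "fle \<mu> b w"
    unfolding a_def b_def using w by (auto intro: E.finf_greatest E.fsup_upper2 E.finf_lower2)
  have "fle \<mu> (a - b) a"
    using E.fle_diff_mono[OF E.fle_refl b(1), of a] by simp
  then have "fle \<mu> (a - b) w"
    using a(2) by (rule E.fle_trans)
  moreover have "fle \<mu> (b - a) b"
    using E.fle_diff_mono[OF E.fle_refl a(1), of b] by simp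
  then have "fle \<mu> (- (a - b)) w"
    using b(2) E.fle_trans by simp
  ultimately show "fle \<mu> (fabs UNIV \<mu> (a - b)) w"
    by (simp add: E.fabs_le_iff)
qed

lemma fuzzy_ideal_image:
  assumes A: "fuzzy_ideal_on UNIV \<mu> A"
  shows "fuzzy_ideal_on (range T) \<nu> (T ` A)"
  unfolding fuzzy_ideal_on_def
proof (intro conjI ballI impI)
  show "subspace (T ` A)"
    using A linear by (simp add: fuzzy_ideal_on_def real_vector.linear_subspace_image)
  fix t s assume "t \<in> range T" and "s \<in> T ` A"
    and le: "fle \<nu> (fabs (range T) \<nu> t) (fabs (range T) \<nu> s)"
  then obtain x y where t: "t = T x" and y: "y \<in> A" "s = T y"
    by auto
  have "fle \<nu> (fabs UNIV \<nu> (T x)) (T (fabs UNIV \<mu> y))"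
    using le by (simp add: t y fabs_range_hom fabs_hom)
  then obtain x' where "T x' = t" and "fle \<mu> (fabs UNIV \<mu> x') (fabs UNIV \<mu> y)"
    using lift_fabs_le[OF E.fabs_nonneg] t by metis
  moreover have "x' \<in> A"
    using A y(1) calculation(2) unfolding fuzzy_ideal_on_def by blast
  ultimately show "t \<in> T ` A"
    by blast
qed auto

lemma fuzzy_ideal_vimage:
  assumes B: "fuzzy_ideal_on (range T) \<nu> B"
  shows "fuzzy_ideal_on UNIV \<mu> (T -` B)"
  unfolding fuzzy_ideal_on_def
proof (intro conjI ballI impI)
  show "subspace (T -` B)"
    using B linear by (simp add: fuzzy_ideal_on_def real_vector.linear_subspace_vimage)
  fix x y assume y: "y \<in> T -` B" and le: "fle \<mu> (fabs UNIV \<mu> x) (fabs UNIV \<mu> y)"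
  have "fle \<nu> (fabs (range T) \<nu> (T x)) (fabs (range T) \<nu> (T y))"
    using fle_hom[OF le] by (simp add: fabs_range_hom)
  then show "x \<in> T -` B"
    using B y unfolding fuzzy_ideal_on_def by blast
qed auto

end

lemma fuzzy_principal_ideal_on_least:
  "fuzzy_ideal_on V \<mu> A \<Longrightarrow> x \<in> A \<Longrightarrow> fuzzy_principal_ideal_on V \<mu> x \<subseteq> A"
  unfolding fuzzy_principal_ideal_on_def by blast

lemma fuzzy_principal_ideal_on_ideal:
  assumes "subspace V" "x \<in> V"
  shows "fuzzy_ideal_on V \<mu> (fuzzy_principal_ideal_on V \<mu> x)"
  using assms unfolding fuzzy_principal_ideal_on_def fuzzy_ideal_on_def
  by (intro conjI subspace_Inter) blast+

lemma fuzzy_principal_ideal_on_mem: "x \<in> fuzzy_principal_ideal_on V \<mu> x"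
  unfolding fuzzy_principal_ideal_on_def by blast

theorem theorem2p6:
  fixes \<mu> :: "'a::real_vector \<Rightarrow> 'a \<Rightarrow> real"
    and \<nu> :: "'b::real_vector \<Rightarrow> 'b \<Rightarrow> real"
    and T :: "'a \<Rightarrow> 'b" and z :: 'a
  assumes "fuzzy_riesz_space \<mu>" and "fuzzy_riesz_space \<nu>"
    and "fuzzy_riesz_hom \<mu> \<nu> T"
    and "z \<in> fpos \<mu>"
  shows "T ` fuzzy_principal_ideal_on UNIV \<mu> z
           = fuzzy_principal_ideal_on (range T) \<nu> (T z)"
proof -
  interpret riesz_homomorphism \<mu> \<nu> T
    using assms(1-3)
    by (intro riesz_homomorphism.intro riesz_homomorphism_axioms.intro fuzzy_riesz.intro)
  let ?I = "fuzzy_principal_ideal_on UNIV \<mu> z"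
  let ?J = "fuzzy_principal_ideal_on (range T) \<nu> (T z)"
  have "?I \<subseteq> T -` ?J"
    using linear
    by (intro fuzzy_principal_ideal_on_least fuzzy_ideal_vimage fuzzy_principal_ideal_on_ideal)
      (auto intro: fuzzy_principal_ideal_on_mem real_vector.linear_subspace_image)
  moreover have "?J \<subseteq> T ` ?I"
    by (intro fuzzy_principal_ideal_on_least fuzzy_ideal_image fuzzy_principal_ideal_on_ideal)
      (auto intro: fuzzy_principal_ideal_on_mem)
  ultimately show ?thesis
    by blast
qed

end
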